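(* The elements $z$ and $z'$ are central in $U^+$. Moreover, $U^+$ embeds as a subalgebra into an algebra $V$ in which $e_1$ and $e_3$ are invertible, such that $V$ is isomorphic to the polynomial algebra $\Bbbk_{q^2}[X^{\pm1},Y^{\pm1}][Z,Z']$ in two central commuting indeterminates $Z,Z'$ over the quantum torus $\Bbbk_{q^2}[X^{\pm1},Y^{\pm1}]$ (with $XY=q^2YX$), via $e_3\mapsto X$, $e_1\mapsto Y$, $z\mapsto Z$, $z'\mapsto Z'$; in particular $V$ is generated by $e_3^{\pm1},e_1^{\pm1},z,z'$.
   Context: $\Bbbk$ is an algebraically closed field of characteristic zero and $q\in\Bbbk^\times$ is not a root of unity. $U^+$ is the $\Bbbk$-algebra generated by $e_1,e_2$ with relations (S1) $e_1^2e_2-(q^2+q^{-2})e_1e_2e_1+e_2e_1^2=0$ and (S2) $e_2^3e_1-(q^2+1+q^{-2})e_2^2e_1e_2+(q^2+1+q^{-2})e_2e_1e_2^2-e_1e_2^3=0$. Set $e_3=e_1e_2-q^2e_2e_1$, $z=e_2e_3-q^2e_3e_2$, $w=e_2e_3-e_3e_2$, $z'=e_1w-q^{-4}we_1$. The quantum torus $\Bbbk_{q^2}[X^{\pm1},Y^{\pm1}]$ is the algebra generated by invertible $X,Y$ with $XY=q^2YX$. *)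

theory Defs
  imports "HOL-Library.Poly_Mapping" "HOL-Computational_Algebra.Polynomial"
begin

datatype gen = E1 | E2

text \<open>Words form a monoid under concatenation; we register it as monoid_add
 so that the library's convolution product on finitely supported functions
 (poly_mapping) gives the free associative algebra k<E1,E2> = (finitely supported k-valued functions on words).\<close>

instantiation list :: (type) monoid_add
begin
definition zero_list_def: "0 = []"
definition plus_list_def: "xs + ys = xs @ ys"
instance by standard (auto simp: zero_list_def plus_list_def)
end

type_synonym 'k free = "gen list \<Rightarrow>\<^sub>0 'k"

definition fsc :: "'k::field \<Rightarrow> 'k free" where
  "fsc c = Poly_Mapping.single [] c"

definition fe1 :: "'k::field free" where "fe1 = Poly_Mapping.single [E1] 1"
definition fe2 :: "'k::field free" where "fe2 = Poly_Mapping.single [E2] 1"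

definition fe3 :: "'k::field \<Rightarrow> 'k free" where
  "fe3 q = fe1 * fe2 - fsc (q^2) * fe2 * fe1"
definition fz :: "'k::field \<Rightarrow> 'k free" where
  "fz q = fe2 * fe3 q - fsc (q^2) * fe3 q * fe2"
definition fw :: "'k::field \<Rightarrow> 'k free" where
  "fw q = fe2 * fe3 q - fe3 q * fe2"
definition fz' :: "'k::field \<Rightarrow> 'k free" where
  "fz' q = fe1 * fw q - fsc (inverse q ^ 4) * fw q * fe1"

definition S1 :: "'k::field \<Rightarrow> 'k free" where
  "S1 q = fe1 * fe1 * fe2 - fsc (q^2 + inverse q ^ 2) * fe1 * fe2 * fe1 + fe2 * fe1 * fe1"
definition S2 :: "'k::field \<Rightarrow> 'k free" where
  "S2 q = fe2 * fe2 * fe2 * fe1 - fsc (q^2 + 1 + inverse q ^ 2) * fe2 * fe2 * fe1 * fe2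
        + fsc (q^2 + 1 + inverse q ^ 2) * fe2 * fe1 * fe2 * fe2 - fe1 * fe2 * fe2 * fe2"

text \<open>Two-sided ideal generated by S1, S2; U^+ is the quotient free/Irel.\<close>
inductive_set Irel :: "'k::field \<Rightarrow> 'k free set" for q where
  zero: "0 \<in> Irel q"
| gen: "r \<in> {S1 q, S2 q} \<Longrightarrow> u * r * v \<in> Irel q"
| add: "a \<in> Irel q \<Longrightarrow> b \<in> Irel q \<Longrightarrow> a + b \<in> Irel q"

text \<open>Basis monomials Y^b X^a Z^m Z'^n are indexed by (a,b,m,n).
 Product: (Y^b X^a Z^m Z'^n)(Y^d X^c Z^m' Z'^n') = q^(2ad) Y^(b+d) X^(a+c) Z^(m+m') Z'^(n+n'),
 which encodes XY = q^2 YX with Z, Z' central.\<close>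

type_synonym 'k qalg = "(int \<times> int \<times> nat \<times> nat) \<Rightarrow>\<^sub>0 'k"

fun tw :: "'k::field \<Rightarrow> int \<times> int \<times> nat \<times> nat \<Rightarrow> int \<times> int \<times> nat \<times> nat \<Rightarrow> 'k" where
  "tw q (a, b, m, n) (c, d, m', n') = (q^2) powi (a * d)"

fun kadd :: "int \<times> int \<times> nat \<times> nat \<Rightarrow> int \<times> int \<times> nat \<times> nat \<Rightarrow> int \<times> int \<times> nat \<times> nat" where
  "kadd (a, b, m, n) (c, d, m', n') = (a + c, b + d, m + m', n + n')"

definition amul :: "'k::field \<Rightarrow> 'k qalg \<Rightarrow> 'k qalg \<Rightarrow> 'k qalg" where
  "amul q f g = (\<Sum>s\<in>Poly_Mapping.keys f. \<Sum>t\<in>Poly_Mapping.keys g.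
      Poly_Mapping.single (kadd s t) (Poly_Mapping.lookup f s * Poly_Mapping.lookup g t * tw q s t))"

definition aone :: "'k::field qalg" where "aone = Poly_Mapping.single (0, 0, 0, 0) 1"
definition aX :: "'k::field qalg" where "aX = Poly_Mapping.single (1, 0, 0, 0) 1"
definition aY :: "'k::field qalg" where "aY = Poly_Mapping.single (0, 1, 0, 0) 1"
definition aZ :: "'k::field qalg" where "aZ = Poly_Mapping.single (0, 0, 1, 0) 1"
definition aZ' :: "'k::field qalg" where "aZ' = Poly_Mapping.single (0, 0, 0, 1) 1"

fun gval :: "'k::field qalg \<Rightarrow> gen \<Rightarrow> 'k qalg" where
  "gval a2 E1 = aY"
| "gval a2 E2 = a2"

fun wprod :: "'k::field \<Rightarrow> 'k qalg \<Rightarrow> gen list \<Rightarrow> 'k qalg" where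
  "wprod q a2 [] = aone"
| "wprod q a2 (x # xs) = amul q (gval a2 x) (wprod q a2 xs)"

definition feval :: "'k::field \<Rightarrow> 'k qalg \<Rightarrow> 'k free \<Rightarrow> 'k qalg" where
  "feval q a2 f = (\<Sum>w\<in>Poly_Mapping.keys f.
      amul q (Poly_Mapping.single (0, 0, 0, 0) (Poly_Mapping.lookup f w)) (wprod q a2 w))"

definition alg_closed_field :: "'k::field itself \<Rightarrow> bool" where
  "alg_closed_field _ \<longleftrightarrow> (\<forall>p::'k poly. degree p \<ge> 1 \<longrightarrow> (\<exists>x. poly p x = 0))"

end

theory Submission
  imports Defs
begin

text \<open>
Modulo the Serre relations one has e3 e1 = q^2 e1 e3, e2 e1 = q^-2 (e1 e2 - e3) and
e2 e3 = q^2 e3 e2 + z, and z commutes with e1 and e2. Hence every element of U^+ is congruent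
to a linear combination of ordered monomials e1^a e3^b z^m e2^n.
Sending e1 to Y and e2 to a suitable combination of X Y^-1, X^-1 Z and X^-1 Y^-1 Z' kills
both relations and sends e3, z, z' to X, Z, Z'. Graded by the degree in Z', the image of
e1^a e3^b z^m e2^n has the leading monomial Y^(a-n) X^(b-n) Z^m Z'^n, and these are pairwise
distinct, so the images of the ordered monomials are linearly independent. Therefore the kernel
of the evaluation is exactly the ideal of relations, and z, z' are central in U^+ because
Z, Z' are central in V.
\<close>

section \<open>The twisted Laurent polynomial algebra\<close>

lemma sum_single_lookup:
  "(\<Sum>k\<in>Poly_Mapping.keys f. Poly_Mapping.single k (Poly_Mapping.lookup f k)) = f"
  by (rule poly_mapping_eqI) (simp add: lookup_sum lookup_single when_def in_keys_iff)

lemma poly_mapping_eq_tupleI: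
  "(\<And>a b c d. Poly_Mapping.lookup f (a, b, c, d) = Poly_Mapping.lookup g (a, b, c, d)) \<Longrightarrow> f = g"
  by (rule poly_mapping_eqI) (metis prod_cases4)

lemma amul_sum_supersets:
  assumes "finite A" "Poly_Mapping.keys f \<subseteq> A" "finite B" "Poly_Mapping.keys g \<subseteq> B"
  shows "amul q f g = (\<Sum>s\<in>A. \<Sum>t\<in>B. Poly_Mapping.single (kadd s t)
           (Poly_Mapping.lookup f s * Poly_Mapping.lookup g t * tw q s t))"
proof -
  have "(\<Sum>t\<in>Poly_Mapping.keys g. Poly_Mapping.single (kadd s t)
           (Poly_Mapping.lookup f s * Poly_Mapping.lookup g t * tw q s t)) =
        (\<Sum>t\<in>B. Poly_Mapping.single (kadd s t)
           (Poly_Mapping.lookup f s * Poly_Mapping.lookup g t * tw q s t))" for s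
    by (rule sum.mono_neutral_left) (use assms in \<open>auto simp: in_keys_iff\<close>)
  moreover have "(\<Sum>s\<in>Poly_Mapping.keys f. \<Sum>t\<in>B. Poly_Mapping.single (kadd s t)
           (Poly_Mapping.lookup f s * Poly_Mapping.lookup g t * tw q s t)) =
        (\<Sum>s\<in>A. \<Sum>t\<in>B. Poly_Mapping.single (kadd s t)
           (Poly_Mapping.lookup f s * Poly_Mapping.lookup g t * tw q s t))"
    by (rule sum.mono_neutral_left) (use assms in \<open>auto simp: in_keys_iff\<close>)
  ultimately show ?thesis
    unfolding amul_def by simp
qed

lemma amul_add_left: "amul q (f + g) h = amul q f h + amul q g h"
proof -
  have "Poly_Mapping.keys (f + g) \<subseteq> Poly_Mapping.keys f \<union> Poly_Mapping.keys g"
    by (rule keys_add)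
  then show ?thesis
    by (simp add: amul_sum_supersets[of "Poly_Mapping.keys f \<union> Poly_Mapping.keys g" _
          "Poly_Mapping.keys h"] lookup_add distrib_right single_add sum.distrib)
qed

lemma amul_add_right: "amul q h (f + g) = amul q h f + amul q h g"
proof -
  have "Poly_Mapping.keys (f + g) \<subseteq> Poly_Mapping.keys f \<union> Poly_Mapping.keys g"
    by (rule keys_add)
  then show ?thesis
    by (simp add: amul_sum_supersets[of "Poly_Mapping.keys h" _
          "Poly_Mapping.keys f \<union> Poly_Mapping.keys g"] lookup_add distrib_left distrib_right single_add sum.distrib)
qed

lemma amul_zero_left [simp]: "amul q 0 h = 0"
  and amul_zero_right [simp]: "amul q h 0 = 0"
  by (simp_all add: amul_def)

lemma amul_diff_left: "amul q (f - g) h = amul q f h - amul q g h"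
  using amul_add_left[of q "f - g" g h] by (simp add: eq_diff_eq)

lemma amul_diff_right: "amul q h (f - g) = amul q h f - amul q h g"
  using amul_add_right[of q h "f - g" g] by (simp add: eq_diff_eq)

lemma amul_sum_left: "amul q (\<Sum>i\<in>I. f i) h = (\<Sum>i\<in>I. amul q (f i) h)"
  by (induction I rule: infinite_finite_induct) (auto simp: amul_add_left)

lemma amul_sum_right: "amul q h (\<Sum>i\<in>I. f i) = (\<Sum>i\<in>I. amul q h (f i))"
  by (induction I rule: infinite_finite_induct) (auto simp: amul_add_right)

lemma amul_single_single:
  "amul q (Poly_Mapping.single s a) (Poly_Mapping.single t b) =
   Poly_Mapping.single (kadd s t) (a * b * tw q s t)"
  by (subst amul_sum_supersets[where A = "{s}" and B = "{t}"]) auto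

lemma amul_assoc:
  assumes "q \<noteq> 0"
  shows "amul q (amul q f g) h = amul q f (amul q g h)"
proof -
  have powi_add: "(q^2) powi (i + j) = (q^2) powi i * (q^2) powi j" for i j
    by (rule power_int_add) (simp add: assms)
  have single_assoc:
    "amul q (amul q (Poly_Mapping.single s a) (Poly_Mapping.single t b)) (Poly_Mapping.single u c) =
        amul q (Poly_Mapping.single s a) (amul q (Poly_Mapping.single t b) (Poly_Mapping.single u c))"
    for s t u a b c
    by (cases s rule: prod_cases4; cases t rule: prod_cases4; cases u rule: prod_cases4)
      (simp add: amul_single_single algebra_simps powi_add)
  have "amul q (amul q
      (\<Sum>s\<in>Poly_Mapping.keys f. Poly_Mapping.single s (Poly_Mapping.lookup f s))
      (\<Sum>t\<in>Poly_Mapping.keys g. Poly_Mapping.single t (Poly_Mapping.lookup g t)))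
      (\<Sum>u\<in>Poly_Mapping.keys h. Poly_Mapping.single u (Poly_Mapping.lookup h u)) =
    amul q (\<Sum>s\<in>Poly_Mapping.keys f. Poly_Mapping.single s (Poly_Mapping.lookup f s))
      (amul q (\<Sum>t\<in>Poly_Mapping.keys g. Poly_Mapping.single t (Poly_Mapping.lookup g t))
      (\<Sum>u\<in>Poly_Mapping.keys h. Poly_Mapping.single u (Poly_Mapping.lookup h u)))"
    by (simp only: amul_sum_left amul_sum_right single_assoc)
  then show ?thesis
    by (simp only: sum_single_lookup)
qed

lemma amul_one_left [simp]: "amul q aone f = f"
proof -
  have single: "amul q aone (Poly_Mapping.single t b) = Poly_Mapping.single t b" for t b
    by (cases t rule: prod_cases4) (simp add: aone_def amul_single_single)
  have "amul q aone (\<Sum>t\<in>Poly_Mapping.keys f. Poly_Mapping.single t (Poly_Mapping.lookup f t)) =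
      (\<Sum>t\<in>Poly_Mapping.keys f. Poly_Mapping.single t (Poly_Mapping.lookup f t))"
    by (simp only: amul_sum_right single)
  then show ?thesis
    by (simp only: sum_single_lookup)
qed

lemma amul_one_right [simp]: "amul q f aone = f"
proof -
  have single: "amul q (Poly_Mapping.single t b) aone = Poly_Mapping.single t b" for t b
    by (cases t rule: prod_cases4) (simp add: aone_def amul_single_single)
  have "amul q (\<Sum>t\<in>Poly_Mapping.keys f. Poly_Mapping.single t (Poly_Mapping.lookup f t)) aone =
      (\<Sum>t\<in>Poly_Mapping.keys f. Poly_Mapping.single t (Poly_Mapping.lookup f t))"
    by (simp only: amul_sum_left single)
  then show ?thesis
    by (simp only: sum_single_lookup)
qed

lemma amul_central_commute:
  "amul q (Poly_Mapping.single (0, 0, m, n) c) f = amul q f (Poly_Mapping.single (0, 0, m, n) c)"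
proof -
  have single: "amul q (Poly_Mapping.single (0, 0, m, n) c) (Poly_Mapping.single t b) =
      amul q (Poly_Mapping.single t b) (Poly_Mapping.single (0, 0, m, n) c)" for t b
    by (cases t rule: prod_cases4) (simp add: amul_single_single algebra_simps)
  have "amul q (Poly_Mapping.single (0, 0, m, n) c)
      (\<Sum>t\<in>Poly_Mapping.keys f. Poly_Mapping.single t (Poly_Mapping.lookup f t)) =
    amul q (\<Sum>t\<in>Poly_Mapping.keys f. Poly_Mapping.single t (Poly_Mapping.lookup f t))
      (Poly_Mapping.single (0, 0, m, n) c)"
    by (simp only: amul_sum_left amul_sum_right single)
  then show ?thesis
    by (simp only: sum_single_lookup)
qed

lemma lookup_amul_scalar:
  "Poly_Mapping.lookup (amul q (Poly_Mapping.single (0, 0, 0, 0) c) f) k = c * Poly_Mapping.lookup f k"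
proof -
  have single: "amul q (Poly_Mapping.single (0, 0, 0, 0) c) (Poly_Mapping.single t b) =
      Poly_Mapping.single t (c * b)" for t b
    by (cases t rule: prod_cases4) (simp add: amul_single_single)
  have "amul q (Poly_Mapping.single (0, 0, 0, 0) c)
      (\<Sum>t\<in>Poly_Mapping.keys f. Poly_Mapping.single t (Poly_Mapping.lookup f t)) =
    (\<Sum>t\<in>Poly_Mapping.keys f. Poly_Mapping.single t (c * Poly_Mapping.lookup f t))"
    by (simp only: amul_sum_right single)
  then show ?thesis
    by (simp add: sum_single_lookup lookup_sum lookup_single when_def in_keys_iff)
qed

lemma keys_amul:
  assumes "k \<in> Poly_Mapping.keys (amul q f g)"
  obtains s t where "s \<in> Poly_Mapping.keys f" "t \<in> Poly_Mapping.keys g" "k = kadd s t"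
proof -
  let ?G = "\<lambda>s t. Poly_Mapping.single (kadd s t)
    (Poly_Mapping.lookup f s * Poly_Mapping.lookup g t * tw q s t)"
  have "Poly_Mapping.keys (amul q f g) \<subseteq>
      (\<Union>s\<in>Poly_Mapping.keys f. Poly_Mapping.keys (\<Sum>t\<in>Poly_Mapping.keys g. ?G s t))"
    unfolding amul_def by (rule keys_sum)
  also have "\<dots> \<subseteq> (\<Union>s\<in>Poly_Mapping.keys f. \<Union>t\<in>Poly_Mapping.keys g. Poly_Mapping.keys (?G s t))"
    by (intro UN_mono order_refl keys_sum)
  finally show thesis
    using assms that by (auto split: if_splits)
qed

section \<open>Evaluation of the free algebra in V\<close>

lemma feval_superset:
  assumes "finite A" "Poly_Mapping.keys f \<subseteq> A"
  shows "feval q a2 f =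
    (\<Sum>w\<in>A. amul q (Poly_Mapping.single (0, 0, 0, 0) (Poly_Mapping.lookup f w)) (wprod q a2 w))"
  unfolding feval_def by (rule sum.mono_neutral_left) (use assms in \<open>auto simp: in_keys_iff\<close>)

lemma feval_add: "feval q a2 (f + g) = feval q a2 f + feval q a2 g"
proof -
  have "Poly_Mapping.keys (f + g) \<subseteq> Poly_Mapping.keys f \<union> Poly_Mapping.keys g"
    by (rule keys_add)
  then show ?thesis
    by (simp add: feval_superset[of "Poly_Mapping.keys f \<union> Poly_Mapping.keys g"]
        lookup_add single_add amul_add_left sum.distrib)
qed

lemma feval_zero [simp]: "feval q a2 0 = 0"
  by (simp add: feval_def)

lemma feval_diff: "feval q a2 (f - g) = feval q a2 f - feval q a2 g"
  using feval_add[of q a2 "f - g" g] by (simp add: eq_diff_eq)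

lemma feval_sum: "feval q a2 (\<Sum>i\<in>I. f i) = (\<Sum>i\<in>I. feval q a2 (f i))"
  by (induction I rule: infinite_finite_induct) (auto simp: feval_add)

lemma feval_single:
  "feval q a2 (Poly_Mapping.single w c) = amul q (Poly_Mapping.single (0, 0, 0, 0) c) (wprod q a2 w)"
  by (subst feval_superset[where A = "{w}"]) auto

lemma free_one: "1 = Poly_Mapping.single [] 1"
  by (metis single_one zero_list_def)

lemma feval_one [simp]: "feval q a2 1 = aone"
  by (simp add: free_one feval_single) (simp add: aone_def)

lemma feval_fsc: "feval q a2 (fsc c) = Poly_Mapping.single (0, 0, 0, 0) c"
  by (simp add: fsc_def feval_single aone_def amul_single_single)

lemma feval_e1: "feval q a2 fe1 = aY"
  by (simp add: fe1_def feval_single aY_def aone_def amul_single_single)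

lemma feval_e2: "feval q a2 fe2 = a2"
  by (simp add: fe2_def feval_single) (metis aone_def amul_one_left amul_one_right)

context
  fixes q :: "'k::field"
  assumes q0: "q \<noteq> 0"
begin

lemma wprod_append: "wprod q a2 (v @ w) = amul q (wprod q a2 v) (wprod q a2 w)"
  by (induction v) (auto simp: amul_assoc[OF q0])

lemma feval_mult: "feval q a2 (f * g) = amul q (feval q a2 f) (feval q a2 g)"
proof -
  let ?s = "\<lambda>c. Poly_Mapping.single (0::int, 0::int, 0::nat, 0::nat) c"
  have "amul q (amul q (?s a) (wprod q a2 v)) (amul q (?s b) (wprod q a2 w)) =
      amul q (amul q (?s a) (?s b)) (amul q (wprod q a2 v) (wprod q a2 w))" for a b v w
    by (simp add: amul_assoc[OF q0] amul_central_commute[of q 0 0 b])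
  then have single: "feval q a2 (Poly_Mapping.single v a * Poly_Mapping.single w b) =
      amul q (feval q a2 (Poly_Mapping.single v a)) (feval q a2 (Poly_Mapping.single w b))" for v w a b
    by (simp add: mult_single feval_single plus_list_def wprod_append amul_single_single)
  have "feval q a2 ((\<Sum>v\<in>Poly_Mapping.keys f. Poly_Mapping.single v (Poly_Mapping.lookup f v)) *
        (\<Sum>w\<in>Poly_Mapping.keys g. Poly_Mapping.single w (Poly_Mapping.lookup g w))) =
      amul q (feval q a2 (\<Sum>v\<in>Poly_Mapping.keys f. Poly_Mapping.single v (Poly_Mapping.lookup f v)))
        (feval q a2 (\<Sum>w\<in>Poly_Mapping.keys g. Poly_Mapping.single w (Poly_Mapping.lookup g w)))"
    by (simp only: sum_product feval_sum amul_sum_left amul_sum_right single) (rule sum.swap)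
  then show ?thesis
    by (simp only: sum_single_lookup)
qed

lemma feval_power_single:
  assumes "feval q a2 x = Poly_Mapping.single (a, b, m, n) 1" and "a * b = 0"
  shows "feval q a2 (x ^ j) = Poly_Mapping.single (int j * a, int j * b, j * m, j * n) 1"
  by (induction j) (use assms in \<open>auto simp: feval_mult amul_single_single algebra_simps aone_def\<close>)

end

lemma fsc_mult: "fsc a * fsc b = fsc (a * b)"
  by (simp add: fsc_def mult_single plus_list_def)

lemma fsc_add: "fsc (a + b) = fsc a + fsc b"
  by (simp add: fsc_def single_add)

lemma fsc_1 [simp]: "fsc 1 = 1"
  by (simp add: fsc_def free_one)

lemma fsc_0 [simp]: "fsc 0 = 0"
  by (simp add: fsc_def)

lemma fsc_uminus: "fsc (- c) = - fsc c"
  by (simp add: fsc_def single_uminus)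

lemma fsc_commute: "x * fsc c = fsc c * x"
proof -
  have "Poly_Mapping.single w a * fsc c = fsc c * Poly_Mapping.single w a" for w a
    by (simp add: fsc_def mult_single plus_list_def mult.commute)
  then have "(\<Sum>w\<in>Poly_Mapping.keys x. Poly_Mapping.single w (Poly_Mapping.lookup x w)) * fsc c =
      fsc c * (\<Sum>w\<in>Poly_Mapping.keys x. Poly_Mapping.single w (Poly_Mapping.lookup x w))"
    by (simp add: sum_distrib_left sum_distrib_right)
  then show ?thesis
    by (simp only: sum_single_lookup)
qed

lemma single_mult_single_mult:
  "Poly_Mapping.single k a * (Poly_Mapping.single l b * x) = Poly_Mapping.single (k + l) (a * b) * x"
  by (simp add: mult.assoc[symmetric] mult_single)

lemmas free_word_simps = fe3_def fz_def fw_def fz'_def S1_def S2_def fe1_def fe2_def fsc_def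
  algebra_simps single_mult_single_mult mult_single plus_list_def
  lookup_add lookup_minus lookup_single when_def

lemma fw_eq: "fw q = fz q + fsc (q^2 - 1) * fe3 q * fe2"
  by (rule poly_mapping_eqI) (simp add: free_word_simps)

context
  fixes q :: "'k::field"
  assumes q0: "q \<noteq> 0"
begin

lemma S1_eq: "S1 q = fe1 * fe3 q - fsc (inverse q ^ 2) * fe3 q * fe1"
  by (rule poly_mapping_eqI) (simp add: free_word_simps, auto simp: field_simps q0)

lemma S2_eq: "S2 q = fsc (- (inverse q ^ 2)) * (fe2 * fz q - fz q * fe2)"
  by (rule poly_mapping_eqI) (simp add: free_word_simps, auto simp: field_simps q0)

lemma e1_z_commutator_eq: "fe1 * fz q - fz q * fe1 = fsc (q^2) * (fe2 * S1 q - S1 q * fe2)"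
  by (rule poly_mapping_eqI) (simp add: free_word_simps, auto simp: field_simps q0)

lemma e2_e1_eq: "fe2 * fe1 = fsc (inverse q ^ 2) * fe1 * fe2 - fsc (inverse q ^ 2) * fe3 q"
  by (rule poly_mapping_eqI) (simp add: free_word_simps, auto simp: field_simps q0)

end

lemma Irel_mult_left: "a \<in> Irel q \<Longrightarrow> x * a \<in> Irel q"
proof (induction a rule: Irel.induct)
  case (gen r u v)
  then show ?case
    using Irel.gen[of r q "x * u" v] by (simp add: mult.assoc)
qed (auto simp: distrib_left intro: Irel.intros)

lemma Irel_mult_right: "a \<in> Irel q \<Longrightarrow> a * x \<in> Irel q"
proof (induction a rule: Irel.induct)
  case (gen r u v)
  then show ?case
    using Irel.gen[of r q u "v * x"] by (simp add: mult.assoc)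
qed (auto simp: distrib_right intro: Irel.intros)

lemma Irel_diff: "a \<in> Irel q \<Longrightarrow> b \<in> Irel q \<Longrightarrow> a - b \<in> Irel q"
  using Irel.add[of a q "(- 1) * b"] Irel_mult_left[of b q "- 1"] by simp

lemma S1_in_Irel: "S1 q \<in> Irel q"
  using Irel.gen[of "S1 q" q 1 1] by simp

lemma S2_in_Irel: "S2 q \<in> Irel q"
  using Irel.gen[of "S2 q" q 1 1] by simp

definition congU :: "'k::field \<Rightarrow> 'k free \<Rightarrow> 'k free \<Rightarrow> bool" where
  "congU q a b \<longleftrightarrow> a - b \<in> Irel q"

lemma congU_refl [simp]: "congU q a a"
  by (simp add: congU_def Irel.zero)

lemma congU_sym: "congU q a b \<Longrightarrow> congU q b a"
  unfolding congU_def using Irel_diff[OF Irel.zero] by fastforce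

lemma congU_trans [trans]: "congU q a b \<Longrightarrow> congU q b c \<Longrightarrow> congU q a c"
  unfolding congU_def using Irel.add by fastforce

lemma congU_add: "congU q a b \<Longrightarrow> congU q c d \<Longrightarrow> congU q (a + c) (b + d)"
  unfolding congU_def using Irel.add by (fastforce simp: algebra_simps)

lemma congU_mult_left: "congU q a b \<Longrightarrow> congU q (x * a) (x * b)"
  unfolding congU_def using Irel_mult_left by (fastforce simp: algebra_simps)

lemma congU_mult_right: "congU q a b \<Longrightarrow> congU q (a * x) (b * x)"
  unfolding congU_def using Irel_mult_right by (fastforce simp: algebra_simps)

definition commutes_z :: "'k::field \<Rightarrow> 'k free \<Rightarrow> bool" where
  "commutes_z q x \<longleftrightarrow> congU q (fz q * x) (x * fz q)"

lemma commutes_z_mult: "commutes_z q x \<Longrightarrow> commutes_z q y \<Longrightarrow> commutes_z q (x * y)"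
proof -
  assume x: "commutes_z q x" and y: "commutes_z q y"
  have "congU q (fz q * x * y) (x * fz q * y)"
    using congU_mult_right[OF x[unfolded commutes_z_def]] .
  also have "congU q (x * fz q * y) (x * (y * fz q))"
    using congU_mult_left[OF y[unfolded commutes_z_def]] by (simp add: mult.assoc)
  finally show ?thesis
    unfolding commutes_z_def by (simp add: mult.assoc)
qed

lemma commutes_z_diff: "commutes_z q x \<Longrightarrow> commutes_z q y \<Longrightarrow> commutes_z q (x - y)"
  unfolding commutes_z_def congU_def using Irel_diff by (fastforce simp: algebra_simps)

lemma commutes_z_fsc: "commutes_z q (fsc c)"
  unfolding commutes_z_def by (simp add: fsc_commute)

lemma commutes_z_power: "commutes_z q x \<Longrightarrow> commutes_z q (x ^ n)"
  by (induction n) (simp_all add: commutes_z_mult commutes_z_def[of q 1])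

lemma commutes_z_power_z: "commutes_z q x \<Longrightarrow> congU q (fz q ^ n * x) (x * fz q ^ n)"
proof (induction n)
  case (Suc n)
  have "congU q (fz q * (fz q ^ n * x)) (fz q * (x * fz q ^ n))"
    using congU_mult_left[OF Suc.IH[OF Suc.prems]] .
  also have "congU q (fz q * (x * fz q ^ n)) (x * fz q * fz q ^ n)"
    using congU_mult_right[OF Suc.prems[unfolded commutes_z_def]] by (simp add: mult.assoc)
  finally show ?case
    by (simp add: mult.assoc power_commutes)
qed simp

context
  fixes q :: "'k::field"
  assumes q0: "q \<noteq> 0"
begin

lemma commutes_z_e1: "commutes_z q fe1"
proof -
  have "fe1 * fz q - fz q * fe1 \<in> Irel q"
    unfolding e1_z_commutator_eq[OF q0] by (intro Irel_mult_left Irel_diff Irel_mult_right S1_in_Irel)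
  then show ?thesis
    unfolding commutes_z_def congU_def using Irel_diff[OF Irel.zero] by fastforce
qed

lemma commutes_z_e2: "commutes_z q fe2"
proof -
  have "fsc (q^2) * S2 q = fsc (q^2 * - (inverse q ^ 2)) * (fe2 * fz q - fz q * fe2)"
    unfolding S2_eq[OF q0] by (simp only: mult.assoc[symmetric] fsc_mult)
  also have "q^2 * - (inverse q ^ 2) = -1"
    by (simp add: q0 field_simps)
  finally have "fz q * fe2 - fe2 * fz q = fsc (q^2) * S2 q"
    by (simp add: fsc_uminus)
  then show ?thesis
    unfolding commutes_z_def congU_def by (simp add: Irel_mult_left S2_in_Irel)
qed

lemma commutes_z_e3: "commutes_z q (fe3 q)"
  unfolding fe3_def by (intro commutes_z_diff commutes_z_mult commutes_z_e1 commutes_z_e2 commutes_z_fsc)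

lemma e3_e1_congU: "congU q (fe3 q * fe1) (fsc (q^2) * fe1 * fe3 q)"
proof -
  have "fsc (- (q^2)) * S1 q =
      fsc (- (q^2)) * (fe1 * fe3 q) - fsc (- (q^2) * inverse q ^ 2) * (fe3 q * fe1)"
    unfolding S1_eq[OF q0] by (simp only: right_diff_distrib mult.assoc[symmetric] fsc_mult)
  also have "- (q^2) * inverse q ^ 2 = -1"
    by (simp add: q0 field_simps)
  finally have "fe3 q * fe1 - fsc (q^2) * fe1 * fe3 q = fsc (- (q^2)) * S1 q"
    by (simp add: fsc_uminus mult.assoc)
  then show ?thesis
    unfolding congU_def by (simp add: Irel_mult_left S1_in_Irel)
qed

end

section \<open>Ordered monomials span U^+\<close>

fun ordmon :: "'k::field \<Rightarrow> nat \<times> nat \<times> nat \<times> nat \<Rightarrow> 'k free" where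
  "ordmon q (a, b, m, n) = fe1 ^ a * (fe3 q ^ b * (fz q ^ m * fe2 ^ n))"

inductive_set ordered_span :: "'k::field \<Rightarrow> 'k free set" for q where
  monomial: "ordmon q i \<in> ordered_span q"
| zero: "0 \<in> ordered_span q"
| add: "f \<in> ordered_span q \<Longrightarrow> g \<in> ordered_span q \<Longrightarrow> f + g \<in> ordered_span q"
| scale: "f \<in> ordered_span q \<Longrightarrow> fsc c * f \<in> ordered_span q"
| congU: "f \<in> ordered_span q \<Longrightarrow> congU q g f \<Longrightarrow> g \<in> ordered_span q"

lemma ordered_span_diff:
  assumes "f \<in> ordered_span q" "g \<in> ordered_span q"
  shows "f - g \<in> ordered_span q"
  using ordered_span.add[OF assms(1) ordered_span.scale[OF assms(2), of "- 1"]]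
  by (simp add: fsc_uminus)

lemma ordered_span_sum: "(\<And>i. i \<in> I \<Longrightarrow> f i \<in> ordered_span q) \<Longrightarrow> (\<Sum>i\<in>I. f i) \<in> ordered_span q"
  by (induction I rule: infinite_finite_induct) (auto intro: ordered_span.zero ordered_span.add)

lemma ordered_span_mult_left:
  assumes monomial: "\<And>i. x * ordmon q i \<in> ordered_span q" and f: "f \<in> ordered_span q"
  shows "x * f \<in> ordered_span q"
  using f
proof (induction f rule: ordered_span.induct)
  case (scale f c)
  then show ?case
    using ordered_span.scale[OF scale.IH, of c] by (simp add: mult.assoc[symmetric] fsc_commute)
next
  case (congU f g)
  then show ?case
    using ordered_span.congU[OF congU.IH congU_mult_left[OF congU.hyps(2)]] by simp
qed (auto simp: distrib_left monomial intro: ordered_span.intros)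

lemma e1_ordmon: "fe1 * ordmon q (a, b, m, n) = ordmon q (Suc a, b, m, n)"
  by (simp add: mult.assoc)

lemma ordered_span_e1: "f \<in> ordered_span q \<Longrightarrow> fe1 * f \<in> ordered_span q"
  by (rule ordered_span_mult_left) (metis e1_ordmon ordered_span.monomial prod_cases4)

context
  fixes q :: "'k::field"
  assumes q0: "q \<noteq> 0"
begin

lemma z_ordmon: "fz q * ordmon q (a, b, m, n) \<in> ordered_span q"
proof -
  have "commutes_z q (fe1 ^ a * fe3 q ^ b)"
    by (intro commutes_z_mult commutes_z_power commutes_z_e1[OF q0] commutes_z_e3[OF q0])
  then have "congU q (fz q * (fe1 ^ a * fe3 q ^ b) * (fz q ^ m * fe2 ^ n))
      ((fe1 ^ a * fe3 q ^ b) * fz q * (fz q ^ m * fe2 ^ n))"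
    unfolding commutes_z_def by (rule congU_mult_right)
  then have "congU q (fz q * ordmon q (a, b, m, n)) (ordmon q (a, b, Suc m, n))"
    by (simp add: mult.assoc)
  then show ?thesis
    by (rule ordered_span.congU[OF ordered_span.monomial])
qed

lemma ordered_span_z: "f \<in> ordered_span q \<Longrightarrow> fz q * f \<in> ordered_span q"
  by (rule ordered_span_mult_left) (metis z_ordmon prod_cases4)

lemma e3_ordmon: "fe3 q * ordmon q (a, b, m, n) \<in> ordered_span q"
proof (induction a)
  case 0
  show ?case
    using ordered_span.monomial[of q "(0, Suc b, m, n)"] by (simp add: mult.assoc)
next
  case (Suc a)
  have "congU q (fe3 q * fe1 * ordmon q (a, b, m, n)) (fsc (q^2) * fe1 * fe3 q * ordmon q (a, b, m, n))"
    by (rule congU_mult_right[OF e3_e1_congU[OF q0]])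
  moreover have "fsc (q^2) * fe1 * fe3 q * ordmon q (a, b, m, n) \<in> ordered_span q"
    using ordered_span.scale[OF ordered_span_e1[OF Suc.IH]] by (simp add: mult.assoc)
  ultimately show ?case
    by (simp add: ordered_span.congU mult.assoc)
qed

lemma ordered_span_e3: "f \<in> ordered_span q \<Longrightarrow> fe3 q * f \<in> ordered_span q"
  by (rule ordered_span_mult_left) (metis e3_ordmon prod_cases4)

lemma e2_ordmon_without_e1: "fe2 * ordmon q (0, b, m, n) \<in> ordered_span q"
proof (induction b)
  case 0
  have "congU q (fz q ^ m * fe2) (fe2 * fz q ^ m)"
    by (rule commutes_z_power_z[OF commutes_z_e2[OF q0]])
  then have "congU q (fe2 * fz q ^ m * fe2 ^ n) (fz q ^ m * fe2 * fe2 ^ n)"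
    by (rule congU_mult_right[OF congU_sym])
  then have "congU q (fe2 * ordmon q (0, 0, m, n)) (ordmon q (0, 0, m, Suc n))"
    by (simp add: mult.assoc)
  then show ?case
    by (rule ordered_span.congU[OF ordered_span.monomial])
next
  case (Suc b)
  have "fe2 * ordmon q (0, Suc b, m, n) =
      fsc (q^2) * (fe3 q * (fe2 * ordmon q (0, b, m, n))) + fz q * ordmon q (0, b, m, n)"
    by (simp add: fz_def algebra_simps)
  then show ?case
    by (simp only:) (intro ordered_span.add ordered_span.scale ordered_span_e3 ordered_span_z Suc
        ordered_span.monomial)
qed

lemma e2_ordmon: "fe2 * ordmon q (a, b, m, n) \<in> ordered_span q"
proof (induction a)
  case (Suc a)
  have "fe2 * ordmon q (Suc a, b, m, n) =
      fsc (inverse q ^ 2) * (fe1 * (fe2 * ordmon q (a, b, m, n))) -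
      fsc (inverse q ^ 2) * (fe3 q * ordmon q (a, b, m, n))"
    by (simp add: mult.assoc[symmetric] e2_e1_eq[OF q0] left_diff_distrib)
  then show ?case
    by (simp only:) (intro ordered_span_diff ordered_span.scale ordered_span_e1 ordered_span_e3 Suc
        ordered_span.monomial)
qed (rule e2_ordmon_without_e1)

lemma ordered_span_e2: "f \<in> ordered_span q \<Longrightarrow> fe2 * f \<in> ordered_span q"
  by (rule ordered_span_mult_left) (metis e2_ordmon prod_cases4)

lemma ordered_span_UNIV: "f \<in> ordered_span q"
proof -
  have word: "Poly_Mapping.single w 1 \<in> ordered_span q" for w
  proof (induction w)
    case Nil
    show ?case
      using ordered_span.monomial[of q "(0, 0, 0, 0)"] by (simp add: free_one[symmetric])
  next
    case (Cons x w)
    have "Poly_Mapping.single (x # w) 1 = Poly_Mapping.single [x] 1 * Poly_Mapping.single w (1::'k)"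
      by (simp add: mult_single plus_list_def)
    then show ?case
      by (cases x) (auto simp: fe1_def[symmetric] fe2_def[symmetric] intro: ordered_span_e1 ordered_span_e2 Cons)
  qed
  have single: "fsc c * Poly_Mapping.single w 1 = Poly_Mapping.single w c" for c w
    by (simp add: fsc_def mult_single plus_list_def)
  have "(\<Sum>w\<in>Poly_Mapping.keys f. fsc (Poly_Mapping.lookup f w) * Poly_Mapping.single w 1)
      \<in> ordered_span q"
    by (intro ordered_span_sum ordered_span.scale word)
  then show ?thesis
    by (simp only: single sum_single_lookup)
qed

end

lemma ordered_span_repr:
  "f \<in> ordered_span q \<Longrightarrow> \<exists>S c. finite S \<and> congU q f (\<Sum>i\<in>S. fsc (c i) * ordmon q i)"
proof (induction f rule: ordered_span.induct)
  case (monomial i)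
  show ?case
    by (rule exI[of _ "{i}"], rule exI[of _ "\<lambda>_. 1"]) simp
next
  case zero
  show ?case
    by (rule exI[of _ "{}"]) simp
next
  case (add f g)
  then obtain S c T d where S: "finite S" "congU q f (\<Sum>i\<in>S. fsc (c i) * ordmon q i)"
    and T: "finite T" "congU q g (\<Sum>i\<in>T. fsc (d i) * ordmon q i)"
    by blast
  let ?c = "\<lambda>i. if i \<in> S then c i else 0" and ?d = "\<lambda>i. if i \<in> T then d i else 0"
  have "(\<Sum>i\<in>S \<union> T. fsc (?c i) * ordmon q i) = (\<Sum>i\<in>S. fsc (c i) * ordmon q i)"
    by (rule sum.mono_neutral_cong_right) (use S T in auto)
  moreover have "(\<Sum>i\<in>S \<union> T. fsc (?d i) * ordmon q i) = (\<Sum>i\<in>T. fsc (d i) * ordmon q i)"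
    by (rule sum.mono_neutral_cong_right) (use S T in auto)
  ultimately have "(\<Sum>i\<in>S \<union> T. fsc (?c i + ?d i) * ordmon q i) =
      (\<Sum>i\<in>S. fsc (c i) * ordmon q i) + (\<Sum>i\<in>T. fsc (d i) * ordmon q i)"
    by (simp add: fsc_add distrib_right sum.distrib)
  then show ?case
    using S T congU_add[OF S(2) T(2)] by (intro exI[of _ "S \<union> T"] exI[of _ "\<lambda>i. ?c i + ?d i"]) simp
next
  case (scale f a)
  then obtain S c where S: "finite S" "congU q f (\<Sum>i\<in>S. fsc (c i) * ordmon q i)"
    by blast
  have "fsc a * (\<Sum>i\<in>S. fsc (c i) * ordmon q i) = (\<Sum>i\<in>S. fsc (a * c i) * ordmon q i)"
    by (simp add: sum_distrib_left mult.assoc[symmetric] fsc_mult)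
  then show ?case
    using S congU_mult_left[OF S(2), of "fsc a"] by (intro exI[of _ S] exI[of _ "\<lambda>i. a * c i"]) simp
next
  case (congU f g)
  then show ?case
    using congU_trans by blast
qed

section \<open>The embedding of U^+ into V\<close>

text \<open>The coefficients are those for which e3, z and z' are mapped to X, Z and Z'.\<close>

definition e2_image :: "'k::field \<Rightarrow> 'k qalg" where
  "e2_image q =
     Poly_Mapping.single (1, -1, 0, 0) (1 / (1 - q^4))
   + Poly_Mapping.single (-1, 0, 1, 0) (1 / (1 - q^2))
   + Poly_Mapping.single (-1, -1, 0, 1) (q^6 / ((q^2 - 1) * (q^4 - 1)))"

lemma power2_neq_1_if_power4_neq_1:
  fixes q :: "'k::comm_ring_1"
  assumes "q^4 \<noteq> 1"
  shows "q^2 \<noteq> 1"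
proof
  assume "q^2 = 1"
  then have "q^4 = 1"
    by (metis one_power2 power_mult numeral_times_numeral semiring_norm(12,13))
  with assms show False ..
qed

lemma nonzero_denominators:
  fixes q :: "'k::comm_ring_1"
  assumes "q^4 \<noteq> 1"
  shows "1 - q^4 \<noteq> 0" "1 - q^2 \<noteq> 0" "q^4 - 1 \<noteq> 0" "q^2 - 1 \<noteq> 0"
    "q^4 \<noteq> 1" "q^2 \<noteq> 1" "1 \<noteq> q^4" "1 \<noteq> q^2"
  using assms power2_neq_1_if_power4_neq_1[OF assms] by auto

context
  fixes q :: "'k::field"
  assumes q0: "q \<noteq> 0" and q4: "q^4 \<noteq> 1"
begin

lemmas feval_e2_image_simps = feval_mult[OF q0] feval_diff feval_add feval_fsc feval_e1 feval_e2
  e2_image_def aX_def aY_def aZ_def aZ'_def amul_add_left amul_add_right amul_diff_left amul_diff_right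
  amul_single_single lookup_add lookup_minus lookup_single when_def

lemma feval_e3: "feval q (e2_image q) (fe3 q) = aX"
  by (rule poly_mapping_eq_tupleI)
    (simp add: fe3_def feval_e2_image_simps, auto simp: divide_simps q0 nonzero_denominators[OF q4])

lemma feval_z: "feval q (e2_image q) (fz q) = aZ"
  by (rule poly_mapping_eq_tupleI)
    (simp add: fz_def feval_mult[OF q0] feval_diff feval_fsc feval_e2 feval_e3,
     simp add: feval_e2_image_simps, auto simp: divide_simps q0 nonzero_denominators[OF q4])

lemma feval_w: "feval q (e2_image q) (fw q) =
    Poly_Mapping.single (2, -1, 0, 0) ((q^2 - 1) / (q^2 * (1 - q^4)))
  + Poly_Mapping.single (0, -1, 0, 1) (q^4 / (q^4 - 1))"
  by (rule poly_mapping_eq_tupleI)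
    (simp add: fw_eq feval_mult[OF q0] feval_add feval_fsc feval_e2 feval_e3 feval_z,
     simp add: feval_e2_image_simps, auto simp: divide_simps q0 nonzero_denominators[OF q4])

lemma feval_z': "feval q (e2_image q) (fz' q) = aZ'"
  by (rule poly_mapping_eq_tupleI)
    (simp add: fz'_def feval_mult[OF q0] feval_diff feval_fsc feval_e1 feval_w,
     simp add: feval_e2_image_simps, auto simp: divide_simps q0 nonzero_denominators[OF q4])

lemma feval_S1: "feval q (e2_image q) (S1 q) = 0"
  by (rule poly_mapping_eq_tupleI)
    (simp add: S1_eq[OF q0] feval_mult[OF q0] feval_diff feval_fsc feval_e1 feval_e3,
     simp add: feval_e2_image_simps, auto simp: field_simps q0)

lemma feval_S2: "feval q (e2_image q) (S2 q) = 0"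
  by (simp add: S2_eq[OF q0] feval_mult[OF q0] feval_diff feval_fsc feval_e2 feval_z aZ_def
      amul_central_commute)

lemma feval_Irel: "f \<in> Irel q \<Longrightarrow> feval q (e2_image q) f = 0"
proof (induction f rule: Irel.induct)
  case (gen r u v)
  then have "feval q (e2_image q) r = 0"
    using feval_S1 feval_S2 by auto
  then show ?case
    by (simp add: feval_mult[OF q0])
qed (simp_all add: feval_add)

end

section \<open>Leading terms and linear independence\<close>

definition leading_term :: "('a \<Rightarrow> nat) \<Rightarrow> 'a \<Rightarrow> 'b \<Rightarrow> ('a \<Rightarrow>\<^sub>0 'b::ab_group_add) \<Rightarrow> bool" where
  "leading_term deg k c f \<longleftrightarrow>
     c \<noteq> 0 \<and> (\<forall>t\<in>Poly_Mapping.keys (f - Poly_Mapping.single k c). deg t < deg k)"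

lemma leading_term_single: "c \<noteq> 0 \<Longrightarrow> leading_term deg k c (Poly_Mapping.single k c)"
  by (simp add: leading_term_def)

lemma leading_term_keys_le:
  assumes "leading_term deg k c f" "t \<in> Poly_Mapping.keys f"
  shows "deg t \<le> deg k"
proof (cases "t = k")
  case False
  then have "t \<in> Poly_Mapping.keys (f - Poly_Mapping.single k c)"
    using assms(2) by (simp add: in_keys_iff lookup_minus lookup_single)
  then show ?thesis
    using assms(1) by (auto simp: leading_term_def)
qed simp

lemma lookup_leading_term:
  assumes "leading_term deg k c f" "deg k \<le> deg t"
  shows "Poly_Mapping.lookup f t = (if t = k then c else 0)"
proof -
  have "t \<notin> Poly_Mapping.keys (f - Poly_Mapping.single k c)"
    using assms by (auto simp: leading_term_def)
  then show ?thesis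
    by (simp add: in_keys_iff lookup_minus lookup_single when_def split: if_splits)
qed

lemma leading_terms_linear_independent:
  fixes F :: "'i \<Rightarrow> 'a \<Rightarrow>\<^sub>0 'b::field"
  assumes "finite S" and "inj_on key S"
    and lead: "\<And>i. i \<in> S \<Longrightarrow> \<exists>c. leading_term deg (key i) c (F i)"
    and vanish: "\<And>t. (\<Sum>i\<in>S. a i * Poly_Mapping.lookup (F i) t) = 0"
  shows "\<forall>i\<in>S. a i = 0"
proof (rule ccontr)
  let ?T = "{i\<in>S. a i \<noteq> 0}"
  assume "\<not> (\<forall>i\<in>S. a i = 0)"
  then have "?T \<noteq> {}" and "finite ?T"
    using \<open>finite S\<close> by auto
  then obtain i0 where i0: "i0 \<in> ?T" and max: "\<And>i. i \<in> ?T \<Longrightarrow> deg (key i) \<le> deg (key i0)"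
    using Max_in[of "(\<lambda>i. deg (key i)) ` ?T"] Max_ge[of "(\<lambda>i. deg (key i)) ` ?T"] by fastforce
  obtain c0 where c0: "leading_term deg (key i0) c0 (F i0)"
    using lead i0 by blast
  have "a i * Poly_Mapping.lookup (F i) (key i0) = (if i = i0 then a i0 * c0 else 0)" if "i \<in> S" for i
  proof (cases "i = i0 \<or> a i = 0")
    case True
    then show ?thesis
      using lookup_leading_term[OF c0] by auto
  next
    case False
    obtain c where "leading_term deg (key i) c (F i)"
      using lead \<open>i \<in> S\<close> by blast
    moreover have "key i0 \<noteq> key i"
      using False i0 \<open>i \<in> S\<close> \<open>inj_on key S\<close> by (auto dest: inj_onD)
    ultimately show ?thesis
      using False max[of i] \<open>i \<in> S\<close> by (simp add: lookup_leading_term)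
  qed
  then have "(\<Sum>i\<in>S. a i * Poly_Mapping.lookup (F i) (key i0)) = a i0 * c0"
    using \<open>finite S\<close> i0 by (simp add: sum.delta cong: sum.cong)
  then show False
    using vanish i0 c0 by (simp add: leading_term_def)
qed

fun degZ' :: "int \<times> int \<times> nat \<times> nat \<Rightarrow> nat" where
  "degZ' (a, b, m, n) = n"

lemma degZ'_kadd: "degZ' (kadd s t) = degZ' s + degZ' t"
  by (cases s rule: prod_cases4; cases t rule: prod_cases4) simp

lemma tw_nonzero: "q \<noteq> 0 \<Longrightarrow> tw q s t \<noteq> 0"
  by (cases s rule: prod_cases4; cases t rule: prod_cases4) simp

lemma leading_term_amul:
  assumes "q \<noteq> 0"
    and f: "leading_term degZ' s c f" and g: "leading_term degZ' t d g"
  shows "leading_term degZ' (kadd s t) (c * d * tw q s t) (amul q f g)"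
proof -
  define f' g' where "f' = f - Poly_Mapping.single s c" and "g' = g - Poly_Mapping.single t d"
  have "amul q f g - Poly_Mapping.single (kadd s t) (c * d * tw q s t) =
      amul q (Poly_Mapping.single s c) g' + amul q f' g"
    by (simp add: f'_def g'_def amul_diff_left amul_diff_right amul_single_single)
  moreover have "degZ' k < degZ' (kadd s t)" if "k \<in> Poly_Mapping.keys (amul q (Poly_Mapping.single s c) g')" for k
    using that f g by (elim keys_amul) (auto simp: degZ'_kadd leading_term_def g'_def split: if_splits)
  moreover have "degZ' k < degZ' (kadd s t)" if "k \<in> Poly_Mapping.keys (amul q f' g)" for k
    using that f g
    by (elim keys_amul) (fastforce simp: degZ'_kadd leading_term_def f'_def dest: leading_term_keys_le[OF g])
  moreover have "c * d * tw q s t \<noteq> 0"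
    using f g tw_nonzero[OF assms(1)] by (simp add: leading_term_def)
  ultimately show ?thesis
    unfolding leading_term_def using keys_add by fastforce
qed

fun lead_key :: "nat \<times> nat \<times> nat \<times> nat \<Rightarrow> int \<times> int \<times> nat \<times> nat" where
  "lead_key (a, b, m, n) = (int b - int n, int a - int n, m, n)"

lemma inj_lead_key: "inj lead_key"
  by (rule injI) (auto elim!: lead_key.elims)

context
  fixes q :: "'k::field"
  assumes q0: "q \<noteq> 0" and q4: "q^4 \<noteq> 1"
begin

lemma leading_term_e2_image:
  "leading_term degZ' (-1, -1, 0, 1) (q^6 / ((q^2 - 1) * (q^4 - 1))) (e2_image q)"
proof -
  have "Poly_Mapping.keys (e2_image q - Poly_Mapping.single (-1, -1, 0, 1) (q^6 / ((q^2 - 1) * (q^4 - 1))))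
      \<subseteq> {(1, -1, 0, 0), (-1, 0, 1, 0)}"
    using keys_add[of "Poly_Mapping.single (1::int, -1::int, 0::nat, 0::nat) (1 / (1 - q^4))"
        "Poly_Mapping.single (-1, 0, 1, 0) (1 / (1 - q^2))"]
    by (auto simp: e2_image_def split: if_splits)
  then show ?thesis
    using q0 nonzero_denominators[OF q4] by (auto simp: leading_term_def)
qed

lemma leading_term_e2_power:
  "\<exists>c. leading_term degZ' (- int n, - int n, 0, n) c (feval q (e2_image q) (fe2 ^ n))"
proof (induction n)
  case 0
  show ?case
    by (auto simp: aone_def intro!: exI leading_term_single)
next
  case (Suc n)
  then obtain c where "leading_term degZ' (- int n, - int n, 0, n) c (feval q (e2_image q) (fe2 ^ n))"
    by blast
  from leading_term_amul[OF q0 leading_term_e2_image this]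
  show ?case
    by (auto simp: feval_mult[OF q0] feval_e2)
qed

lemma leading_term_feval_ordmon:
  "\<exists>c. leading_term degZ' (lead_key i) c (feval q (e2_image q) (ordmon q i))"
proof -
  obtain a b m n where i: "i = (a, b, m, n)"
    by (cases i rule: prod_cases4)
  obtain c where c: "leading_term degZ' (- int n, - int n, 0, n) c (feval q (e2_image q) (fe2 ^ n))"
    using leading_term_e2_power by blast
  have "\<exists>c. leading_term degZ'
      (kadd (0, int a, 0, 0) (kadd (int b, 0, 0, 0) (kadd (0, 0, m, 0) (- int n, - int n, 0, n)))) c
      (amul q (Poly_Mapping.single (0, int a, 0, 0) 1) (amul q (Poly_Mapping.single (int b, 0, 0, 0) 1)
        (amul q (Poly_Mapping.single (0, 0, m, 0) 1) (feval q (e2_image q) (fe2 ^ n)))))"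
    by (rule exI, (rule leading_term_amul[OF q0] leading_term_single c | simp)+)
  moreover have "feval q (e2_image q) (ordmon q i) =
      amul q (Poly_Mapping.single (0, int a, 0, 0) 1) (amul q (Poly_Mapping.single (int b, 0, 0, 0) 1)
        (amul q (Poly_Mapping.single (0, 0, m, 0) 1) (feval q (e2_image q) (fe2 ^ n))))"
    using feval_power_single[OF q0, of _ fe1 0 1 0 0 a] feval_power_single[OF q0, of _ "fe3 q" 1 0 0 0 b]
      feval_power_single[OF q0, of _ "fz q" 0 0 1 0 m]
    by (simp add: i feval_mult[OF q0] feval_e1 feval_e3[OF q0 q4] feval_z[OF q0 q4] aX_def aY_def aZ_def)
  ultimately show ?thesis
    by (simp add: i)
qed

lemma feval_eq_0_iff: "feval q (e2_image q) f = 0 \<longleftrightarrow> f \<in> Irel q"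
proof
  assume f0: "feval q (e2_image q) f = 0"
  obtain S c where S: "finite S" and f: "congU q f (\<Sum>i\<in>S. fsc (c i) * ordmon q i)"
    using ordered_span_repr[OF ordered_span_UNIV[OF q0]] by blast
  have "feval q (e2_image q) (\<Sum>i\<in>S. fsc (c i) * ordmon q i) = 0"
    using feval_Irel[OF q0 q4, of "f - (\<Sum>i\<in>S. fsc (c i) * ordmon q i)"] f f0
    by (simp add: congU_def feval_diff)
  moreover have "feval q (e2_image q) (\<Sum>i\<in>S. fsc (c i) * ordmon q i) =
      (\<Sum>i\<in>S. amul q (Poly_Mapping.single (0, 0, 0, 0) (c i)) (feval q (e2_image q) (ordmon q i)))"
    by (simp only: feval_sum feval_mult[OF q0] feval_fsc)
  ultimately have sum0: "(\<Sum>i\<in>S. amul q (Poly_Mapping.single (0, 0, 0, 0) (c i))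
      (feval q (e2_image q) (ordmon q i))) = 0"
    by simp
  have vanish: "(\<Sum>i\<in>S. c i * Poly_Mapping.lookup (feval q (e2_image q) (ordmon q i)) t) = 0" for t
    using arg_cong[OF sum0, of "\<lambda>p. Poly_Mapping.lookup p t"] by (simp add: lookup_sum lookup_amul_scalar)
  have "\<forall>i\<in>S. c i = 0"
    by (rule leading_terms_linear_independent[OF S inj_on_subset[OF inj_lead_key subset_UNIV]
          leading_term_feval_ordmon vanish])
  then show "f \<in> Irel q"
    using f by (simp add: congU_def)
qed (rule feval_Irel[OF q0 q4])

lemma commutator_in_Irel_if_central_image:
  assumes "feval q (e2_image q) x = Poly_Mapping.single (0, 0, m, n) 1"
  shows "x * f - f * x \<in> Irel q"
  using assms amul_central_commute
  by (simp add: feval_eq_0_iff[symmetric] feval_diff feval_mult[OF q0])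

end

theorem mainTheorem11:
  fixes q :: "'k::field_char_0"
  assumes "alg_closed_field TYPE('k)"
    and "q \<noteq> 0"
    and "\<forall>n::nat. n > 0 \<longrightarrow> q ^ n \<noteq> 1"
  shows "(\<forall>f. fz q * f - f * fz q \<in> Irel q)
       \<and> (\<forall>f. fz' q * f - f * fz' q \<in> Irel q)
       \<and> (\<exists>a2. (\<forall>f. feval q a2 f = 0 \<longleftrightarrow> f \<in> Irel q)
              \<and> feval q a2 (fe3 q) = aX
              \<and> feval q a2 fe1 = aY
              \<and> feval q a2 (fz q) = aZ
              \<and> feval q a2 (fz' q) = aZ'
              \<and> (\<exists>u. amul q u aX = aone \<and> amul q aX u = aone)
              \<and> (\<exists>u. amul q u aY = aone \<and> amul q aY u = aone))"
proof -
  have q0: "q \<noteq> 0" and q4: "q^4 \<noteq> 1"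
    using assms(2,3) by auto
  have "amul q (Poly_Mapping.single (-1, 0, 0, 0) 1) aX = aone"
    "amul q aX (Poly_Mapping.single (-1, 0, 0, 0) 1) = aone"
    "amul q (Poly_Mapping.single (0, -1, 0, 0) 1) aY = aone"
    "amul q aY (Poly_Mapping.single (0, -1, 0, 0) 1) = aone"
    by (simp_all add: aX_def aY_def aone_def amul_single_single)
  moreover note commutator_in_Irel_if_central_image[OF q0 q4 feval_z[OF q0 q4, unfolded aZ_def]]
    commutator_in_Irel_if_central_image[OF q0 q4 feval_z'[OF q0 q4, unfolded aZ'_def]]
    feval_eq_0_iff[OF q0 q4] feval_e3[OF q0 q4] feval_e1 feval_z[OF q0 q4] feval_z'[OF q0 q4]
  ultimately show ?thesis
    by blast
qed

end
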